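(* For every $n\ge1$ and every $A\subseteq[1;n]$ one has $\Lambda_A=\widehat{\Lambda}_A$ in $U_q(\mathfrak{sl}_2)^{\otimes n}$.
   Context: Let $\mathbb{K}$ be a field and $q\in\mathbb{K}$ not a root of unity. $U_q(\mathfrak{sl}_2)$ is the associative $\mathbb{K}$-algebra with generators $E,F,K,K^{-1}$ and relations $KK^{-1}=K^{-1}K=1$, $KE=q^2EK$, $KF=q^{-2}FK$, $EF-FE=\frac{K-K^{-1}}{q-q^{-1}}$, with Casimir element $\Lambda=(q-q^{-1})^2EF+q^{-1}K+qK^{-1}$ and coproduct $\Delta(E)=E\otimes1+K\otimes E$, $\Delta(F)=F\otimes K^{-1}+1\otimes F$, $\Delta(K^{\pm1})=K^{\pm1}\otimes K^{\pm1}$. $\mathcal{I}_R$ is the subalgebra generated by $EK^{-1},F,K^{-1},\Lambda$, with algebra morphism $\tau_R:\mathcal{I}_R\to U_q(\mathfrak{sl}_2)\otimes\mathcal{I}_R$: $\tau_R(EK^{-1})=K^{-1}\otimes EK^{-1}$, $\tau_R(F)=K\otimes F-q^{-3}(q-q^{-1})^2F^2K\otimes EK^{-1}+q^{-1}(q+q^{-1})FK\otimes K^{-1}-q^{-1}FK\otimes\Lambda$, $\tau_R(K^{-1})=1\otimes K^{-1}-q^{-1}(q-q^{-1})^2F\otimes EK^{-1}$, $\tau_R(\Lambda)=1\otimes\Lambda$. $\mathcal{I}_L$ is the subalgebra generated by $E,FK,K,\Lambda$, with algebra morphism $\tau_L:\mathcal{I}_L\to\mathcal{I}_L\otimes U_q(\mathfrak{sl}_2)$: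 $\tau_L(E)=E\otimes K$, $\tau_L(FK)=FK\otimes K^{-1}-q^{-1}(q-q^{-1})^2E\otimes F^2K+q(q+q^{-1})K\otimes F-q\Lambda\otimes F$, $\tau_L(K)=K\otimes1-q^{-1}(q-q^{-1})^2E\otimes FK$, $\tau_L(\Lambda)=\Lambda\otimes1$. $[i;j]=\{i,\dots,j\}$; $1^{\otimes\ell}\otimes\varphi\otimes1^{\otimes m}$ applies $\varphi$ to tensor position $\ell+1$. Set $\Lambda_\varnothing=\widehat\Lambda_\varnothing=q+q^{-1}$. For $A=\{a_1<\dots<a_m\}\subseteq[1;n]$: (right extension) $\Lambda_A=1^{\otimes(a_1-1)}\otimes(\mu_m\circ\cdots\circ\mu_2)(\Lambda)\otimes1^{\otimes(n-a_m)}$ with $\mu_i=(1^{\otimes(a_i-a_1-1)}\otimes\tau_R)\circ\cdots\circ(1^{\otimes(a_{i-1}-a_1+1)}\otimes\tau_R)\circ(1^{\otimes(a_{i-1}-a_1)}\otimes\Delta)$; (left extension) $\widehat{\Lambda}_A=1^{\otimes(a_1-1)}\otimes(\widehat\mu_1\circ\widehat\mu_2\circ\cdots\circ\widehat\mu_{m-1})(\Lambda)\otimes1^{\otimes(n-a_m)}$ with $\widehat\mu_i=(\tau_L\otimes1^{\otimes(a_m-a_i-1)})\circ\cdots\circ(\tau_L\otimes1^{\otimes(a_m-a_{i+1}+1)})\circ(\Delta\otimes1^{\otimes(a_m-a_{i+1})})$. In both, the $\tau_R$ (resp. $\tau_L$) factors are absent when consecutive elements of $A$ differ by $1$; the compositions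 are well defined. *)

theory Defs
  imports Main
begin

text \<open>
  Elements of the tensor power of U_q(sl_2) are represented by noncommutative polynomial
  expressions in generators placed in tensor slots (slot i = i-th tensor factor, 1-based).
  Besides E, F, K, K^-1 we have named generators for the derived elements E K^-1, F K and the
  Casimir Lambda, so that the subalgebras I_R (generated by E K^-1, F, K^-1, Lambda) and
  I_L (generated by E, F K, K, Lambda) can be addressed syntactically.
\<close>

datatype gen = GE | GF | GK | GKi | GEKi | GFK | GLam

datatype 'k uexp = Sc 'k | G nat gen | Add "'k uexp" "'k uexp" | Mul "'k uexp" "'k uexp"

definition sumE :: "'k::zero uexp list \<Rightarrow> 'k uexp" where
  "sumE xs = foldr Add xs (Sc 0)"

definition prodE :: "'k::one uexp list \<Rightarrow> 'k uexp" where
  "prodE xs = foldr Mul xs (Sc 1)"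

definition smul :: "'k \<Rightarrow> 'k uexp \<Rightarrow> 'k uexp" where
  "smul a x = Mul (Sc a) x"

fun usubst :: "(nat \<Rightarrow> gen \<Rightarrow> 'k uexp) \<Rightarrow> 'k uexp \<Rightarrow> 'k uexp" where
  "usubst \<sigma> (Sc a) = Sc a"
| "usubst \<sigma> (G i g) = \<sigma> i g"
| "usubst \<sigma> (Add x y) = Add (usubst \<sigma> x) (usubst \<sigma> y)"
| "usubst \<sigma> (Mul x y) = Mul (usubst \<sigma> x) (usubst \<sigma> y)"

text \<open>at_pos p phi x = (1^{(p-1)} (x) phi (x) 1^{...}) x, where phi p g is the image of
  generator g as an expression in slots p and p+1; slots after p are shifted by one.\<close>

definition at_pos :: "nat \<Rightarrow> (nat \<Rightarrow> gen \<Rightarrow> 'k uexp) \<Rightarrow> 'k uexp \<Rightarrow> 'k uexp" where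
  "at_pos p \<phi> = usubst (\<lambda>j g. if j < p then G j g else if j = p then \<phi> p g else G (Suc j) g)"

text \<open>1^{d} (x) - : shift all slots by d.\<close>

definition shiftE :: "nat \<Rightarrow> 'k uexp \<Rightarrow> 'k uexp" where
  "shiftE d = usubst (\<lambda>j g. G (j + d) g)"

text \<open>The image of each generator is written so that the second tensor factor of
  the image of an I_R generator lies in I_R and the first tensor factor of the image of an
  I_L generator lies in I_L.  For Lambda we use the identity
  Delta(Lambda) = Lambda (x) K^-1 + K (x) Lambda - (q+q^-1) K (x) K^-1
                  + (q-q^-1)^2 E (x) F + (q-q^-1)^2 q^-2 FK (x) EK^-1.\<close>

definition delta :: "'k::field \<Rightarrow> nat \<Rightarrow> gen \<Rightarrow> 'k uexp" where
  "delta q p g = (let c = (q - inverse q)^2 in case g of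
      GE \<Rightarrow> Add (G p GE) (Mul (G p GK) (G (p+1) GE))
    | GF \<Rightarrow> Add (Mul (G p GF) (G (p+1) GKi)) (G (p+1) GF)
    | GK \<Rightarrow> Mul (G p GK) (G (p+1) GK)
    | GKi \<Rightarrow> Mul (G p GKi) (G (p+1) GKi)
    | GEKi \<Rightarrow> Add (Mul (G p GEKi) (G (p+1) GKi)) (G (p+1) GEKi)
    | GFK \<Rightarrow> Add (G p GFK) (Mul (G p GK) (G (p+1) GFK))
    | GLam \<Rightarrow> sumE [ prodE [G p GLam, G (p+1) GKi],
                     prodE [G p GK, G (p+1) GLam],
                     smul (- (q + inverse q)) (prodE [G p GK, G (p+1) GKi]),
                     smul c (prodE [G p GE, G (p+1) GF]),
                     smul (c * inverse q ^ 2) (prodE [G p GFK, G (p+1) GEKi]) ])"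

text \<open>tau_R : I_R -> U (x) I_R on the generators of I_R (slot p = U, slot p+1 = I_R).
  It is only ever applied to slots whose content is written in the I_R generators;
  the value on other generators is irrelevant (set to 0).\<close>

definition tau_R :: "'k::field \<Rightarrow> nat \<Rightarrow> gen \<Rightarrow> 'k uexp" where
  "tau_R q p g = (let c = (q - inverse q)^2 in case g of
      GEKi \<Rightarrow> Mul (G p GKi) (G (p+1) GEKi)
    | GF \<Rightarrow> sumE [ prodE [G p GK, G (p+1) GF],
                   smul (- (inverse q ^ 3 * c)) (prodE [G p GF, G p GF, G p GK, G (p+1) GEKi]),
                   smul (inverse q * (q + inverse q)) (prodE [G p GF, G p GK, G (p+1) GKi]),
                   smul (- inverse q) (prodE [G p GF, G p GK, G (p+1) GLam]) ]
    | GKi \<Rightarrow> Add (G (p+1) GKi) (smul (- (inverse q * c)) (prodE [G p GF, G (p+1) GEKi]))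
    | GLam \<Rightarrow> G (p+1) GLam
    | _ \<Rightarrow> Sc 0)"

text \<open>tau_L : I_L -> I_L (x) U on the generators of I_L (slot p = I_L, slot p+1 = U).\<close>

definition tau_L :: "'k::field \<Rightarrow> nat \<Rightarrow> gen \<Rightarrow> 'k uexp" where
  "tau_L q p g = (let c = (q - inverse q)^2 in case g of
      GE \<Rightarrow> Mul (G p GE) (G (p+1) GK)
    | GFK \<Rightarrow> sumE [ prodE [G p GFK, G (p+1) GKi],
                    smul (- (inverse q * c)) (prodE [G p GE, G (p+1) GF, G (p+1) GF, G (p+1) GK]),
                    smul (q * (q + inverse q)) (prodE [G p GK, G (p+1) GF]),
                    smul (- q) (prodE [G p GLam, G (p+1) GF]) ]
    | GK \<Rightarrow> Add (G p GK) (smul (- (inverse q * c)) (prodE [G p GE, G (p+1) GFK]))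
    | GLam \<Rightarrow> G p GLam
    | _ \<Rightarrow> Sc 0)"

text \<open>Right extension: mu_i = (1^{a_i-a_1-1} (x) tau_R) o ... o (1^{a_{i-1}-a_1+1} (x) tau_R)
  o (1^{a_{i-1}-a_1} (x) Delta).\<close>

definition mu_R :: "'k::field \<Rightarrow> nat \<Rightarrow> nat \<Rightarrow> nat \<Rightarrow> 'k uexp \<Rightarrow> 'k uexp" where
  "mu_R q a1 aprev ai x =
     fold (\<lambda>j y. at_pos j (tau_R q) y) [aprev - a1 + 2 ..< ai - a1 + 1]
       (at_pos (aprev - a1 + 1) (delta q) x)"

definition LambdaR :: "'k::field \<Rightarrow> nat set \<Rightarrow> 'k uexp" where
  "LambdaR q A = (if A = {} then Sc (q + inverse q) else
     (let as = sorted_list_of_set A; m = length as; a1 = as ! 0 in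
      shiftE (a1 - 1)
        (fold (\<lambda>i x. mu_R q a1 (as ! (i - 2)) (as ! (i - 1)) x) [2 ..< m + 1] (G 1 GLam))))"

text \<open>Left extension: hat mu_i = (tau_L (x) 1^{a_m-a_i-1}) o ... o (tau_L (x) 1^{a_m-a_{i+1}+1})
  o (Delta (x) 1^{a_m-a_{i+1}}); all these act on the first slot.\<close>

definition mu_L :: "'k::field \<Rightarrow> nat \<Rightarrow> nat \<Rightarrow> nat \<Rightarrow> 'k uexp \<Rightarrow> 'k uexp" where
  "mu_L q am ai anext x =
     fold (\<lambda>k y. at_pos 1 (tau_L q) y) [am - anext + 1 ..< am - ai]
       (at_pos 1 (delta q) x)"

definition LambdaL :: "'k::field \<Rightarrow> nat set \<Rightarrow> 'k uexp" where
  "LambdaL q A = (if A = {} then Sc (q + inverse q) else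
     (let as = sorted_list_of_set A; m = length as; a1 = as ! 0; am = as ! (m - 1) in
      shiftE (a1 - 1)
        (fold (\<lambda>i x. mu_L q am (as ! (i - 1)) (as ! i) x) (rev [1 ..< m]) (G 1 GLam))))"

definition gen_val :: "'k::field \<Rightarrow> ('k \<Rightarrow> 'r::ring_1) \<Rightarrow> (nat \<Rightarrow> 'r) \<Rightarrow> (nat \<Rightarrow> 'r)
    \<Rightarrow> (nat \<Rightarrow> 'r) \<Rightarrow> (nat \<Rightarrow> 'r) \<Rightarrow> nat \<Rightarrow> gen \<Rightarrow> 'r" where
  "gen_val q sc E F K Ki i g = (case g of
      GE \<Rightarrow> E i | GF \<Rightarrow> F i | GK \<Rightarrow> K i | GKi \<Rightarrow> Ki i
    | GEKi \<Rightarrow> E i * Ki i | GFK \<Rightarrow> F i * K i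
    | GLam \<Rightarrow> sc ((q - inverse q)^2) * E i * F i + sc (inverse q) * K i + sc q * Ki i)"

fun ueval :: "('k \<Rightarrow> 'r::ring_1) \<Rightarrow> (nat \<Rightarrow> gen \<Rightarrow> 'r) \<Rightarrow> 'k uexp \<Rightarrow> 'r" where
  "ueval sc v (Sc a) = sc a"
| "ueval sc v (G i g) = v i g"
| "ueval sc v (Add x y) = ueval sc v x + ueval sc v y"
| "ueval sc v (Mul x y) = ueval sc v x * ueval sc v y"

definition central_alg_hom :: "('k::field \<Rightarrow> 'r::ring_1) \<Rightarrow> bool" where
  "central_alg_hom sc \<longleftrightarrow> (\<forall>a b. sc (a + b) = sc a + sc b) \<and> (\<forall>a b. sc (a * b) = sc a * sc b)
     \<and> sc 1 = 1 \<and> (\<forall>a x. sc a * x = x * sc a)"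

text \<open>n commuting copies of the defining relations of U_q(sl_2) inside R, i.e. an algebra
  morphism from U_q(sl_2)^{(x) n} to R (the tensor power is the universal such algebra).\<close>

definition Uq_tensor_rep :: "'k::field \<Rightarrow> ('k \<Rightarrow> 'r::ring_1) \<Rightarrow> (nat \<Rightarrow> 'r) \<Rightarrow> (nat \<Rightarrow> 'r)
    \<Rightarrow> (nat \<Rightarrow> 'r) \<Rightarrow> (nat \<Rightarrow> 'r) \<Rightarrow> nat \<Rightarrow> bool" where
  "Uq_tensor_rep q sc E F K Ki n \<longleftrightarrow>
     central_alg_hom sc \<and>
     (\<forall>i\<in>{1..n}. K i * Ki i = 1 \<and> Ki i * K i = 1
        \<and> K i * E i = sc (q ^ 2) * E i * K i
        \<and> K i * F i = sc (inverse q ^ 2) * F i * K i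
        \<and> E i * F i - F i * E i = sc (inverse (q - inverse q)) * (K i - Ki i)) \<and>
     (\<forall>i\<in>{1..n}. \<forall>j\<in>{1..n}. i \<noteq> j \<longrightarrow>
        (\<forall>x\<in>{E i, F i, K i, Ki i}. \<forall>y\<in>{E j, F j, K j, Ki j}. x * y = y * x))"

end

theory Submission
  imports Defs
begin

(* Evaluated in a representation, substituting a two-slot map at slot p (at_pos) amounts to
   changing the valuation of the slots: slots p and p+1 are replaced by the image of their values,
   later slots move down by one.  Both Lambda_A and hat-Lambda_A thus become Lambda evaluated in a
   valuation built from one block (Delta, then a run of tau's) per gap of A.  Blocks acting on
   disjoint slots commute, so they can be reordered until only two local identities for the
   Casimir remain: coassociativity (1 (x) Delta) Delta(Lambda) = (Delta (x) 1) Delta(Lambda) and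
   the exchange (1 (x) tau_R) Delta(Lambda) = (tau_L (x) 1) Delta(Lambda). *)

section \<open>Slot valuations\<close>

lemma ueval_usubst: "ueval sc v (usubst \<sigma> x) = ueval sc (\<lambda>i g. ueval sc v (\<sigma> i g)) x"
  by (induction x) auto

lemma ueval_shiftE: "ueval sc v (shiftE d x) = ueval sc (\<lambda>j. v (j + d)) x"
  by (simp add: shiftE_def ueval_usubst)

lemma ueval_fold:
  assumes "\<And>j w y. j \<in> set js \<Longrightarrow> ueval sc w (f j y) = ueval sc (W j w) y"
  shows "ueval sc v (fold f js y) = ueval sc (foldr W js v) y"
  using assms by (induction js arbitrary: v y) auto

definition at_val :: "nat \<Rightarrow> ('a \<Rightarrow> 'a \<Rightarrow> 'a) \<Rightarrow> (nat \<Rightarrow> 'a) \<Rightarrow> nat \<Rightarrow> 'a" where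
  "at_val p \<Phi> v = (\<lambda>j. if j < p then v j else if j = p then \<Phi> (v p) (v (Suc p)) else v (Suc j))"

lemma ueval_at_pos:
  assumes "\<And>g. ueval sc v (\<phi> p g) = \<Phi> (v p) (v (Suc p)) g"
  shows "ueval sc v (at_pos p \<phi> x) = ueval sc (at_val p \<Phi> v) x"
  unfolding at_pos_def ueval_usubst
  by (rule arg_cong[where f = "\<lambda>w. ueval sc w x"]) (auto simp: at_val_def assms)

section \<open>Reordering blocks of slot maps\<close>

lemma at_val_1_at_val_commute:
  "2 \<le> p \<Longrightarrow> at_val 1 \<psi> (at_val (Suc p) \<phi> v) = at_val p \<phi> (at_val 1 \<psi> v)"
  by (auto simp: at_val_def)

definition chain_val :: "('a \<Rightarrow> 'a \<Rightarrow> 'a) \<Rightarrow> nat \<Rightarrow> nat \<Rightarrow> (nat \<Rightarrow> 'a) \<Rightarrow> nat \<Rightarrow> 'a" where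
  "chain_val T p g v = foldr (\<lambda>j. at_val j T) [Suc p..<Suc p + g] v"

definition iter_val :: "('a \<Rightarrow> 'a \<Rightarrow> 'a) \<Rightarrow> nat \<Rightarrow> (nat \<Rightarrow> 'a) \<Rightarrow> nat \<Rightarrow> 'a" where
  "iter_val T h v = (at_val 1 T ^^ h) v"

lemma chain_val_0 [simp]: "chain_val T p 0 v = v"
  by (simp add: chain_val_def)

lemma chain_val_Suc: "chain_val T p (Suc g) v = chain_val T p g (at_val (Suc p + g) T v)"
  by (simp add: chain_val_def)

lemma iter_val_0 [simp]: "iter_val T 0 v = v"
  by (simp add: iter_val_def)

lemma iter_val_Suc: "iter_val T (Suc h) v = at_val 1 T (iter_val T h v)"
  by (simp add: iter_val_def)

lemma chain_val_below: "j \<le> p \<Longrightarrow> chain_val T p g v j = v j"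
  by (induction g arbitrary: v) (auto simp: chain_val_Suc at_val_def)

lemma iter_val_above: "2 \<le> j \<Longrightarrow> iter_val T h v j = v (j + h)"
  by (induction h arbitrary: j) (auto simp: iter_val_Suc at_val_def)

lemma iter_val_at_val:
  "2 \<le> p \<Longrightarrow> iter_val \<psi> h (at_val (p + h) \<phi> v) = at_val p \<phi> (iter_val \<psi> h v)"
proof (induction h arbitrary: p)
  case 0
  then show ?case by simp
next
  case (Suc h)
  have "iter_val \<psi> (Suc h) (at_val (p + Suc h) \<phi> v) = at_val 1 \<psi> (iter_val \<psi> h (at_val (Suc p + h) \<phi> v))"
    by (simp add: iter_val_Suc)
  also have "\<dots> = at_val 1 \<psi> (at_val (Suc p) \<phi> (iter_val \<psi> h v))"
    using Suc.IH[of "Suc p"] Suc.prems by simp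
  also have "\<dots> = at_val p \<phi> (at_val 1 \<psi> (iter_val \<psi> h v))"
    using Suc.prems by (rule at_val_1_at_val_commute)
  finally show ?case by (simp add: iter_val_Suc)
qed

lemma iter_val_chain_val:
  "1 \<le> p \<Longrightarrow> iter_val \<psi> h (chain_val T (p + h) g v) = chain_val T p g (iter_val \<psi> h v)"
proof (induction g arbitrary: v)
  case 0
  then show ?case by simp
next
  case (Suc g)
  have "iter_val \<psi> h (chain_val T (p + h) (Suc g) v)
      = iter_val \<psi> h (chain_val T (p + h) g (at_val ((Suc p + g) + h) T v))"
    by (simp add: chain_val_Suc algebra_simps)
  also have "\<dots> = chain_val T p g (iter_val \<psi> h (at_val ((Suc p + g) + h) T v))"
    using Suc by simp
  also have "\<dots> = chain_val T p g (at_val (Suc p + g) T (iter_val \<psi> h v))"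
    using Suc.prems by (subst iter_val_at_val) auto
  finally show ?case by (simp add: chain_val_Suc)
qed

lemma chain_val_at_val_1:
  "1 \<le> p \<Longrightarrow> chain_val T p g (at_val 1 \<psi> v) = at_val 1 \<psi> (chain_val T (Suc p) g v)"
proof (induction g arbitrary: v)
  case 0
  then show ?case by simp
next
  case (Suc g)
  have "chain_val T p (Suc g) (at_val 1 \<psi> v) = chain_val T p g (at_val (Suc p + g) T (at_val 1 \<psi> v))"
    by (simp add: chain_val_Suc)
  also have "\<dots> = chain_val T p g (at_val 1 \<psi> (at_val (Suc (Suc p + g)) T v))"
    using Suc.prems by (subst at_val_1_at_val_commute) auto
  also have "\<dots> = at_val 1 \<psi> (chain_val T (Suc p) g (at_val (Suc (Suc p + g)) T v))"
    using Suc by simp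
  finally show ?case by (simp add: chain_val_Suc)
qed

(* The valuation seen through the paper's mu_i: Delta at slot p, then T at slots p+1, ..., p+g,
   where g = a_i - a_(i-1) - 1 is the gap; mu_L_val is hat-mu_i, which only ever acts on slot 1. *)
definition mu_R_val ::
    "('a \<Rightarrow> 'a \<Rightarrow> 'a) \<Rightarrow> ('a \<Rightarrow> 'a \<Rightarrow> 'a) \<Rightarrow> nat \<Rightarrow> nat \<Rightarrow> (nat \<Rightarrow> 'a) \<Rightarrow> nat \<Rightarrow> 'a"
  where "mu_R_val D T p g v = at_val p D (chain_val T p g v)"

definition mu_L_val ::
    "('a \<Rightarrow> 'a \<Rightarrow> 'a) \<Rightarrow> ('a \<Rightarrow> 'a \<Rightarrow> 'a) \<Rightarrow> nat \<Rightarrow> (nat \<Rightarrow> 'a) \<Rightarrow> nat \<Rightarrow> 'a"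
  where "mu_L_val D T h v = at_val 1 D (iter_val T h v)"

lemma mu_R_val_below: "j < p \<Longrightarrow> mu_R_val D T p g v j = v j"
  by (simp add: mu_R_val_def at_val_def chain_val_below)

lemma mu_L_val_above: "2 \<le> j \<Longrightarrow> mu_L_val D T h v j = v (j + h + 1)"
  by (simp add: mu_L_val_def at_val_def iter_val_above)

lemma mu_L_val_mu_R_val_commute:
  assumes "2 \<le> p"
  shows "mu_L_val D L h (mu_R_val D R (p + h + 1) g v) = mu_R_val D R p g (mu_L_val D L h v)"
proof -
  have "mu_L_val D L h (mu_R_val D R (p + h + 1) g v)
      = at_val 1 D (iter_val L h (at_val (Suc p + h) D (chain_val R (Suc p + h) g v)))"
    by (simp add: mu_L_val_def mu_R_val_def)
  also have "\<dots> = at_val 1 D (at_val (Suc p) D (iter_val L h (chain_val R (Suc p + h) g v)))"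
    using assms by (subst iter_val_at_val) auto
  also have "\<dots> = at_val 1 D (at_val (Suc p) D (chain_val R (Suc p) g (iter_val L h v)))"
    by (subst iter_val_chain_val) auto
  also have "\<dots> = at_val p D (at_val 1 D (chain_val R (Suc p) g (iter_val L h v)))"
    using assms by (rule at_val_1_at_val_commute)
  also have "\<dots> = at_val p D (chain_val R p g (at_val 1 D (iter_val L h v)))"
    using assms by (subst chain_val_at_val_1) auto
  finally show ?thesis by (simp add: mu_L_val_def mu_R_val_def)
qed

fun mu_R_seq ::
    "('a \<Rightarrow> 'a \<Rightarrow> 'a) \<Rightarrow> ('a \<Rightarrow> 'a \<Rightarrow> 'a) \<Rightarrow> nat \<Rightarrow> nat list \<Rightarrow> (nat \<Rightarrow> 'a) \<Rightarrow> nat \<Rightarrow> 'a"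
  where
  "mu_R_seq D T p [] v = v"
| "mu_R_seq D T p (g # gs) v = mu_R_val D T p g (mu_R_seq D T (p + Suc g) gs v)"

(* For gs = gaps as this is last as - hd as + 1, the number of slots of the expression. *)
definition span :: "nat list \<Rightarrow> nat" where
  "span gs = Suc (sum_list (map Suc gs))"

lemma mu_R_seq_snoc:
  "mu_R_seq D T p (gs @ [g]) v = mu_R_seq D T p gs (mu_R_val D T (p + span gs - 1) g v)"
  by (induction gs arbitrary: p) (auto simp: span_def add.assoc)

(* obs reads off Lambda in slot 1; the assumptions are the coassociativity and the exchange
   identity of the Casimir, the latter under a side condition on the middle slot. *)
locale slot_exchange =
  fixes D R L :: "'a \<Rightarrow> 'a \<Rightarrow> 'a" and obs :: "'a \<Rightarrow> 'b" and P :: "'a \<Rightarrow> bool"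
  assumes coassoc: "obs (D a (D b c)) = obs (D (D a b) c)"
    and exchange: "P b \<Longrightarrow> obs (D a (R b c)) = obs (D (L a b) c)"
begin

lemma mu_R_val_1_eq_mu_L_val:
  "(\<And>j. 2 \<le> j \<Longrightarrow> j < g + 2 \<Longrightarrow> P (v j)) \<Longrightarrow> obs (mu_R_val D R 1 g v 1) = obs (mu_L_val D L g v 1)"
proof (induction g arbitrary: v)
  case 0
  then show ?case by (simp add: mu_R_val_def mu_L_val_def)
next
  case (Suc g)
  define v' where "v' = at_val (Suc (Suc g)) R v"
  define w where "w = iter_val L g v"
  have "obs (mu_R_val D R 1 (Suc g) v 1) = obs (mu_R_val D R 1 g v' 1)"
    by (simp add: mu_R_val_def chain_val_Suc v'_def)
  also have "\<dots> = obs (mu_L_val D L g v' 1)"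
    using Suc.IH[of v'] Suc.prems by (simp add: v'_def at_val_def)
  also have "mu_L_val D L g v' 1 = D (w 1) (R (w 2) (w 3))"
    using iter_val_at_val[of 2 L g R v] by (simp add: mu_L_val_def v'_def w_def at_val_def)
  also have "obs \<dots> = obs (D (L (w 1) (w 2)) (w 3))"
    using Suc.prems[of "2 + g"] by (intro exchange) (simp add: w_def iter_val_above)
  also have "D (L (w 1) (w 2)) (w 3) = mu_L_val D L (Suc g) v 1"
    by (simp add: mu_L_val_def iter_val_Suc at_val_def w_def eval_nat_numeral)
  finally show ?case .
qed

lemma mu_L_val_mu_R_val_adjacent:
  "obs (mu_L_val D L h (mu_R_val D R (Suc (Suc h)) g v) 1) = obs (mu_R_val D R 1 g (mu_L_val D L h v) 1)"
proof -
  define w where "w = chain_val R 2 g (iter_val L h v)"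
  have "mu_L_val D L h (mu_R_val D R (Suc (Suc h)) g v)
      = at_val 1 D (iter_val L h (at_val (2 + h) D (chain_val R (2 + h) g v)))"
    by (simp add: mu_L_val_def mu_R_val_def)
  also have "\<dots> = at_val 1 D (at_val 2 D (iter_val L h (chain_val R (2 + h) g v)))"
    by (subst iter_val_at_val) auto
  also have "\<dots> = at_val 1 D (at_val 2 D w)"
    unfolding w_def by (subst iter_val_chain_val) auto
  finally have lhs: "mu_L_val D L h (mu_R_val D R (Suc (Suc h)) g v) = at_val 1 D (at_val 2 D w)" .
  have rhs: "mu_R_val D R 1 g (mu_L_val D L h v) = at_val 1 D (at_val 1 D w)"
    unfolding mu_R_val_def mu_L_val_def w_def by (subst chain_val_at_val_1) (auto simp: numeral_2_eq_2)
  show ?thesis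
    unfolding lhs rhs by (simp add: at_val_def coassoc eval_nat_numeral)
qed

lemma fold_mu_L_val_mu_R_val:
  "(\<And>j. 2 \<le> j \<Longrightarrow> j < span (gs @ [g]) \<Longrightarrow> P (v j)) \<Longrightarrow>
    obs (fold (mu_L_val D L) gs (mu_R_val D R (span gs) g v) 1)
    = obs (mu_L_val D L g (fold (mu_L_val D L) gs v) 1)"
proof (induction gs arbitrary: v)
  case Nil
  then show ?case using mu_R_val_1_eq_mu_L_val[of g v] by (simp add: span_def)
next
  case (Cons h gs)
  have P_shift: "P (mu_L_val D L h v j)" if "2 \<le> j" "j < span (gs @ [g])" for j
    using Cons.prems[of "j + h + 1"] that by (simp add: mu_L_val_above span_def)
  show ?case
  proof (cases "gs = []")
    case True
    have "obs (mu_L_val D L h (mu_R_val D R (Suc (Suc h)) g v) 1)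
        = obs (mu_R_val D R 1 g (mu_L_val D L h v) 1)"
      by (rule mu_L_val_mu_R_val_adjacent)
    also have "\<dots> = obs (mu_L_val D L g (mu_L_val D L h v) 1)"
      using P_shift True by (intro mu_R_val_1_eq_mu_L_val) (simp add: span_def)
    finally show ?thesis using True by (simp add: span_def)
  next
    case False
    then have "2 \<le> span gs" by (cases gs) (auto simp: span_def)
    then have "mu_L_val D L h (mu_R_val D R (span (h # gs)) g v) = mu_R_val D R (span gs) g (mu_L_val D L h v)"
      using mu_L_val_mu_R_val_commute[of "span gs" D L h R g v] by (simp add: span_def add_ac)
    then show ?thesis using Cons.IH[OF P_shift] by simp
  qed
qed

lemma mu_R_seq_eq_fold_mu_L_val:
  "(\<And>j. 2 \<le> j \<Longrightarrow> j < span gs \<Longrightarrow> P (v j)) \<Longrightarrow>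
    obs (mu_R_seq D R 1 gs v 1) = obs (fold (mu_L_val D L) gs v 1)"
proof (induction gs arbitrary: v rule: rev_induct)
  case Nil
  then show ?case by simp
next
  case (snoc g gs)
  have "obs (mu_R_seq D R 1 (gs @ [g]) v 1) = obs (mu_R_seq D R 1 gs (mu_R_val D R (span gs) g v) 1)"
    by (simp add: mu_R_seq_snoc)
  also have "\<dots> = obs (fold (mu_L_val D L) gs (mu_R_val D R (span gs) g v) 1)"
    using snoc.prems by (intro snoc.IH) (simp add: mu_R_val_below span_def)
  also have "\<dots> = obs (mu_L_val D L g (fold (mu_L_val D L) gs v) 1)"
    using snoc.prems by (rule fold_mu_L_val_mu_R_val)
  finally show ?case by simp
qed

end

section \<open>The two identities for the Casimir\<close>

definition delta_val ::
    "('k::field \<Rightarrow> 'r::ring_1) \<Rightarrow> 'k \<Rightarrow> (gen \<Rightarrow> 'r) \<Rightarrow> (gen \<Rightarrow> 'r) \<Rightarrow> gen \<Rightarrow> 'r"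
  where "delta_val sc q a b g = ueval sc (\<lambda>j. if j = 1 then a else b) (delta q 1 g)"

definition tau_R_val ::
    "('k::field \<Rightarrow> 'r::ring_1) \<Rightarrow> 'k \<Rightarrow> (gen \<Rightarrow> 'r) \<Rightarrow> (gen \<Rightarrow> 'r) \<Rightarrow> gen \<Rightarrow> 'r"
  where "tau_R_val sc q a b g = ueval sc (\<lambda>j. if j = 1 then a else b) (tau_R q 1 g)"

definition tau_L_val ::
    "('k::field \<Rightarrow> 'r::ring_1) \<Rightarrow> 'k \<Rightarrow> (gen \<Rightarrow> 'r) \<Rightarrow> (gen \<Rightarrow> 'r) \<Rightarrow> gen \<Rightarrow> 'r"
  where "tau_L_val sc q a b g = ueval sc (\<lambda>j. if j = 1 then a else b) (tau_L q 1 g)"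

lemma ueval_delta: "ueval sc v (delta q p g) = delta_val sc q (v p) (v (Suc p)) g"
  by (cases g) (simp_all add: delta_val_def delta_def sumE_def prodE_def smul_def Let_def)

lemma ueval_tau_R: "ueval sc v (tau_R q p g) = tau_R_val sc q (v p) (v (Suc p)) g"
  by (cases g) (simp_all add: tau_R_val_def tau_R_def sumE_def prodE_def smul_def Let_def)

lemma ueval_tau_L: "ueval sc v (tau_L q p g) = tau_L_val sc q (v p) (v (Suc p)) g"
  by (cases g) (simp_all add: tau_L_val_def tau_L_def sumE_def prodE_def smul_def Let_def)

lemma ueval_at_pos_delta:
  "ueval sc v (at_pos p (delta q) x) = ueval sc (at_val p (delta_val sc q) v) x"
  by (rule ueval_at_pos) (rule ueval_delta)

lemma ueval_at_pos_tau_R: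
  "ueval sc v (at_pos p (tau_R q) x) = ueval sc (at_val p (tau_R_val sc q) v) x"
  by (rule ueval_at_pos) (rule ueval_tau_R)

lemma ueval_at_pos_tau_L:
  "ueval sc v (at_pos p (tau_L q) x) = ueval sc (at_val p (tau_L_val sc q) v) x"
  by (rule ueval_at_pos) (rule ueval_tau_L)

locale central_scalars =
  fixes sc :: "'k::field \<Rightarrow> 'r::ring_1"
  assumes central_alg_hom: "central_alg_hom sc"
begin

lemma sc_add: "sc (a + b) = sc a + sc b"
  and sc_mult: "sc (a * b) = sc a * sc b"
  and sc_one: "sc 1 = 1"
  and sc_commute: "sc a * x = x * sc a"
  using central_alg_hom unfolding central_alg_hom_def by blast+

lemma sc_zero: "sc 0 = 0"
  using sc_add[of 0 0] by simp

lemma sc_minus: "sc (- a) = - sc a"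
  using sc_add[of "- a" a] by (simp add: sc_zero eq_neg_iff_add_eq_0)

definition smult :: "'k \<Rightarrow> 'r \<Rightarrow> 'r" where
  "smult k x = sc k * x"

lemma mult_sc_eq_smult: "sc k * x = smult k x"
  by (simp add: smult_def)

lemma mult_smult_right: "x * smult k y = smult k (x * y)"
proof -
  have "x * (sc k * y) = (sc k * x) * y"
    by (simp add: sc_commute mult.assoc)
  then show ?thesis
    by (simp add: smult_def mult.assoc)
qed

lemma mult_smult_left: "smult k x * y = smult k (x * y)"
  by (simp add: smult_def mult.assoc)

lemma smult_smult: "smult a (smult b x) = smult (a * b) x"
  by (simp add: smult_def sc_mult mult.assoc)

lemma smult_add_right: "smult k (x + y) = smult k x + smult k y"
  and smult_diff_right: "smult k (x - y) = smult k x - smult k y"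
  and smult_minus_right: "smult k (- x) = - smult k x"
  by (simp_all add: smult_def distrib_left right_diff_distrib)

lemma smult_zero_left: "smult 0 x = 0"
  and smult_add_left: "smult (a + b) x = smult a x + smult b x"
  and smult_minus_left: "smult (- a) x = - smult a x"
  by (simp_all add: smult_def sc_zero sc_add sc_minus distrib_right)

lemma smult_diff_left: "smult (a - b) x = smult a x - smult b x"
  using smult_add_left[of a "- b" x] by (simp add: smult_minus_left)

(* Moving every scalar to the front normalises both sides to linear combinations of monomials. *)
lemmas smult_normalize = mult_sc_eq_smult mult_smult_right mult_smult_left smult_smult
  smult_add_right smult_diff_right smult_minus_right smult_minus_left smult_zero_left
  mult.assoc distrib_left distrib_right left_diff_distrib right_diff_distrib
  mult_minus_left mult_minus_right

lemma delta_val_Lam_coassoc: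
  "delta_val sc q a (delta_val sc q b c) GLam = delta_val sc q (delta_val sc q a b) c GLam"
  by (simp add: delta_val_def delta_def sumE_def prodE_def smul_def Let_def smult_normalize sc_one sc_zero)

lemma delta_val_tau_R_val_Lam:
  assumes "q \<noteq> 0" and "b GFK = b GF * b GK"
  shows "delta_val sc q a (tau_R_val sc q b c) GLam = delta_val sc q (tau_L_val sc q a b) c GLam"
proof -
  \<comment> \<open>Abstracting inverse q stops the simplifier from rewriting it; only q * inverse q = 1 matters.\<close>
  obtain p where p: "inverse q = p" by blast
  have "q * p = 1" unfolding p[symmetric] using assms(1) by simp
  then have qp: "p * q = 1" "q * (p * x) = x" "p * (q * x) = x" for x
    by (simp_all add: mult.commute flip: mult.assoc)
  show ?thesis
    by (simp add: delta_val_def tau_R_val_def tau_L_val_def tau_R_def tau_L_def delta_def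
        sumE_def prodE_def smul_def Let_def smult_normalize sc_one sc_zero assms(2) p)
      (simp add: algebra_simps smult_add_left smult_diff_left smult_minus_left
        power2_eq_square power3_eq_cube \<open>q * p = 1\<close> qp)
qed

lemma slot_exchange_Lam:
  assumes "q \<noteq> 0"
  shows "slot_exchange (delta_val sc q) (tau_R_val sc q) (tau_L_val sc q) (\<lambda>u. u GLam)
    (\<lambda>u. u GFK = u GF * u GK)"
  using assms by unfold_locales (simp_all add: delta_val_Lam_coassoc delta_val_tau_R_val_Lam)

end

section \<open>Right and left extensions\<close>

fun gaps :: "nat list \<Rightarrow> nat list" where
  "gaps (x # y # r) = (y - x - 1) # gaps (y # r)"
| "gaps _ = []"

lemma foldr_mu_R_val_gaps:
  "sorted_wrt (<) xs \<Longrightarrow> xs \<noteq> [] \<Longrightarrow> b \<le> hd xs \<Longrightarrow>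
   foldr (\<lambda>i. mu_R_val D T (xs!(i-2) - b + 1) (xs!(i-1) - xs!(i-2) - 1)) [2..<length xs + 1] w
   = mu_R_seq D T (hd xs - b + 1) (gaps xs) w"
proof (induction xs rule: gaps.induct)
  case (1 x y r)
  let ?f = "\<lambda>xs i. mu_R_val D T (xs!(i-2) - b + 1) (xs!(i-1) - xs!(i-2) - 1)"
  have "x < y" using "1.prems"(1) by simp
  have "[2..<length (x # y # r) + 1] = 2 # map Suc [2..<length (y # r) + 1]"
    by (subst upt_conv_Cons) (auto simp: map_Suc_upt)
  moreover have "foldr (?f (x # y # r) \<circ> Suc) [2..<length (y # r) + 1] w
      = foldr (?f (y # r)) [2..<length (y # r) + 1] w"
  proof (rule foldr_cong)
    fix i acc assume "i \<in> set [2..<length (y # r) + 1]"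
    then have "2 \<le> i" by (simp del: upt_Suc)
    then have "(x # y # r) ! (Suc i - 2) = (y # r) ! (i - 2)"
      and "(x # y # r) ! (Suc i - 1) = (y # r) ! (i - 1)"
      by (cases i; simp add: nth_Cons')+
    then show "(?f (x # y # r) \<circ> Suc) i acc = ?f (y # r) i acc"
      by simp
  qed simp_all
  moreover have "x - b + 1 + Suc (y - x - 1) = y - b + 1"
    using \<open>x < y\<close> "1.prems"(3) by simp
  ultimately show ?case
    using "1.IH" "1.prems" \<open>x < y\<close> by (simp add: foldr_map Suc_diff_Suc)
qed auto

lemma fold_mu_L_val_gaps:
  "fold (\<lambda>i. mu_L_val D T (xs!i - xs!(i-1) - 1)) [1..<length xs] w = fold (mu_L_val D T) (gaps xs) w"
proof (induction xs arbitrary: w rule: gaps.induct)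
  case (1 x y r)
  let ?f = "\<lambda>xs i. mu_L_val D T (xs!i - xs!(i-1) - 1)"
  have "[1..<length (x # y # r)] = 1 # map Suc [1..<length (y # r)]"
    by (subst upt_conv_Cons) (auto simp: map_Suc_upt)
  moreover have "fold (?f (x # y # r) \<circ> Suc) [1..<length (y # r)] w
      = fold (?f (y # r)) [1..<length (y # r)] w" for w
    by (rule fold_cong) (auto simp: nth_Cons')
  ultimately show ?case
    using "1.IH" by (simp add: fold_map)
qed auto

lemma ueval_mu_R:
  assumes "a1 \<le> ap" "ap < ai"
  shows "ueval sc w (mu_R q a1 ap ai y)
    = ueval sc (mu_R_val (delta_val sc q) (tau_R_val sc q) (ap - a1 + 1) (ai - ap - 1) w) y"
proof -
  have "ueval sc w (mu_R q a1 ap ai y) = ueval sc (foldr (\<lambda>j. at_val j (tau_R_val sc q))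
      [ap - a1 + 2..<ai - a1 + 1] w) (at_pos (ap - a1 + 1) (delta q) y)"
    unfolding mu_R_def by (rule ueval_fold) (rule ueval_at_pos_tau_R)
  also have "[ap - a1 + 2..<ai - a1 + 1] = [Suc (ap - a1 + 1)..<Suc (ap - a1 + 1) + (ai - ap - 1)]"
    using assms by (intro arg_cong2[where f = upt]) auto
  finally show ?thesis
    by (simp add: ueval_at_pos_delta mu_R_val_def chain_val_def)
qed

lemma foldr_const_eq_funpow: "foldr (\<lambda>_. f) xs v = (f ^^ length xs) v"
  by (induction xs) auto

lemma ueval_mu_L:
  assumes "ai < an" "an \<le> am"
  shows "ueval sc w (mu_L q am ai an y)
    = ueval sc (mu_L_val (delta_val sc q) (tau_L_val sc q) (an - ai - 1) w) y"
proof -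
  have "ueval sc w (mu_L q am ai an y) = ueval sc (foldr (\<lambda>j. at_val 1 (tau_L_val sc q))
      [am - an + 1..<am - ai] w) (at_pos 1 (delta q) y)"
    unfolding mu_L_def by (rule ueval_fold) (rule ueval_at_pos_tau_L)
  moreover have "length [am - an + 1..<am - ai] = an - ai - 1"
    using assms by simp
  ultimately show ?thesis
    by (simp add: ueval_at_pos_delta mu_L_val_def iter_val_def foldr_const_eq_funpow)
qed

lemma ueval_LambdaR:
  assumes "finite A" "A \<noteq> {}"
  defines "as \<equiv> sorted_list_of_set A"
  shows "ueval sc v (LambdaR q A)
    = mu_R_seq (delta_val sc q) (tau_R_val sc q) 1 (gaps as) (\<lambda>j. v (j + (hd as - 1))) 1 GLam"
proof -
  have sorted: "sorted_wrt (<) as" and "as \<noteq> []"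
    using assms by (simp_all add: as_def)
  then have hd: "hd as = as ! 0"
    by (simp add: hd_conv_nth)
  let ?v = "\<lambda>j. v (j + (hd as - 1))"
  have "ueval sc v (LambdaR q A)
      = ueval sc ?v (fold (\<lambda>i. mu_R q (as!0) (as!(i-2)) (as!(i-1))) [2..<length as + 1] (G 1 GLam))"
    using assms by (simp add: LambdaR_def Let_def ueval_shiftE hd flip: as_def)
  also have "\<dots> = ueval sc (foldr (\<lambda>i. mu_R_val (delta_val sc q) (tau_R_val sc q)
      (as!(i-2) - as!0 + 1) (as!(i-1) - as!(i-2) - 1)) [2..<length as + 1] ?v) (G 1 GLam)"
  proof (rule ueval_fold)
    fix i w y assume "i \<in> set [2..<length as + 1]"
    then have "as!0 \<le> as!(i-2)" and "as!(i-2) < as!(i-1)"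
      using sorted sorted_nth_mono[OF strict_sorted_imp_sorted[OF sorted]]
      by (auto simp: sorted_wrt_nth_less)
    then show "ueval sc w (mu_R q (as!0) (as!(i-2)) (as!(i-1)) y) = ueval sc (mu_R_val (delta_val sc q)
        (tau_R_val sc q) (as!(i-2) - as!0 + 1) (as!(i-1) - as!(i-2) - 1) w) y"
      by (rule ueval_mu_R)
  qed
  also have "\<dots> = mu_R_seq (delta_val sc q) (tau_R_val sc q) 1 (gaps as) ?v 1 GLam"
    using foldr_mu_R_val_gaps[OF sorted \<open>as \<noteq> []\<close>, of "as!0" "delta_val sc q" "tau_R_val sc q" ?v] hd
    by simp
  finally show ?thesis .
qed

lemma ueval_LambdaL:
  assumes "finite A" "A \<noteq> {}"
  defines "as \<equiv> sorted_list_of_set A"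
  shows "ueval sc v (LambdaL q A)
    = fold (mu_L_val (delta_val sc q) (tau_L_val sc q)) (gaps as) (\<lambda>j. v (j + (hd as - 1))) 1 GLam"
proof -
  have sorted: "sorted_wrt (<) as" and "as \<noteq> []"
    using assms by (simp_all add: as_def)
  then have hd: "hd as = as ! 0"
    by (simp add: hd_conv_nth)
  let ?v = "\<lambda>j. v (j + (hd as - 1))"
  let ?am = "as ! (length as - 1)"
  have "ueval sc v (LambdaL q A)
      = ueval sc ?v (fold (\<lambda>i. mu_L q ?am (as!(i-1)) (as!i)) (rev [1..<length as]) (G 1 GLam))"
    using assms by (simp add: LambdaL_def Let_def ueval_shiftE hd flip: as_def)
  also have "\<dots> = ueval sc (foldr (\<lambda>i. mu_L_val (delta_val sc q) (tau_L_val sc q)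
      (as!i - as!(i-1) - 1)) (rev [1..<length as]) ?v) (G 1 GLam)"
  proof (rule ueval_fold)
    fix i w y assume "i \<in> set (rev [1..<length as])"
    then have "as!(i-1) < as!i" and "as!i \<le> ?am"
      using sorted sorted_nth_mono[OF strict_sorted_imp_sorted[OF sorted]]
      by (auto simp: sorted_wrt_nth_less)
    then show "ueval sc w (mu_L q ?am (as!(i-1)) (as!i) y)
        = ueval sc (mu_L_val (delta_val sc q) (tau_L_val sc q) (as!i - as!(i-1) - 1) w) y"
      by (rule ueval_mu_L)
  qed
  also have "\<dots> = fold (mu_L_val (delta_val sc q) (tau_L_val sc q)) (gaps as) ?v 1 GLam"
    using fold_mu_L_val_gaps[of "delta_val sc q" "tau_L_val sc q" as ?v] by (simp add: foldr_conv_fold)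
  finally show ?thesis .
qed

theorem proposition2p12:
  fixes q :: "'k::field" and sc :: "'k \<Rightarrow> 'r::ring_1"
    and E F K Ki :: "nat \<Rightarrow> 'r" and n :: nat and A :: "nat set"
  assumes "q \<noteq> 0" and "\<forall>m::nat. m > 0 \<longrightarrow> q ^ m \<noteq> 1"
    and "n \<ge> 1" and "A \<subseteq> {1..n}"
    and "Uq_tensor_rep q sc E F K Ki n"
  shows "ueval sc (gen_val q sc E F K Ki) (LambdaR q A)
       = ueval sc (gen_val q sc E F K Ki) (LambdaL q A)"
proof (cases "A = {}")
  case True
  then show ?thesis by (simp add: LambdaR_def LambdaL_def)
next
  case False
  interpret central_scalars sc
    using assms(5) by unfold_locales (simp add: Uq_tensor_rep_def)
  have "finite A"
    using assms(4) finite_subset by blast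
  moreover have "gen_val q sc E F K Ki j GFK = gen_val q sc E F K Ki j GF * gen_val q sc E F K Ki j GK" for j
    by (simp add: gen_val_def)
  ultimately show ?thesis
    using False slot_exchange.mu_R_seq_eq_fold_mu_L_val[OF slot_exchange_Lam[OF assms(1)]]
    by (simp add: ueval_LambdaR ueval_LambdaL)
qed

end
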